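(* Let $Q=\{q_1,\ldots,q_n\}\subset\mathbb{P}^1$ be distinct points and $\vec g=(g_1,\ldots,g_n)$ effective divisors on $[0,1)$ of common degree $r$, $g_i=\sum_\alpha m_i(\alpha)[\alpha]$, with $\sum_{i,\alpha}m_i(\alpha)\alpha\in\mathbb{Z}$. Suppose the defect is strictly positive: $\delta(\vec g)=r(n-2)-\sum_i T(g_i)>0$. Fix, for each $i$, any good arrangement $a_{i,1},\ldots,a_{i,r}$ of $g_i$. Then it is possible to choose integers $k_1,\ldots,k_r$ satisfying $k_{j+1}\geq \tau_j+k_j+2-n$ for all $j=1,\ldots,r$ (indices modulo $r$, so $k_{r+1}=k_1$) such that $\deg^{\rm par}(E)=0$, where $E=\bigoplus_{j=1}^r E^j$ and $E^j=[k_j;a_{1,j},\ldots,a_{n,j}]$.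
   Context: A parabolic line bundle on $(\mathbb{P}^1,Q)$ is written $[k;a_1,\ldots,a_n]$ with $k\in\mathbb{Z}$, $a_i\in[0,1)$, meaning $\mathcal{O}(k)(a_1q_1+\cdots+a_nq_n)$ (underlying bundle $\mathcal{O}(k)$, weight $a_i$ at $q_i$); its parabolic degree is $k+\sum_i a_i$, and the parabolic degree of a direct sum is the sum. An arrangement of $g_i$ is a sequence $a_{i,1},\ldots,a_{i,r}\in[0,1)$ in which each $\alpha$ occurs exactly $m_i(\alpha)$ times. Indices are taken modulo $r$ ($a_{i,r+1}=a_{i,1}$). An arrangement is good if $\#\{t\in\{1,\ldots,r\}: a_{i,t}\geq a_{i,t+1}\}$ is minimal among all arrangements of $g_i$; this minimum is denoted $T(g_i)$. For the chosen arrangements, $\tau_j=\#\{i: a_{i,j}\geq a_{i,j+1}\}$. *)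

theory Defs
  imports Complex_Main "HOL-Library.Multiset"
begin

text \<open>Weights lie in [0,1); a divisor g on [0,1) is a multiset of reals in [0,1).
  Arrangements are lists (0-indexed, cyclic).\<close>

definition is_arrangement :: "real multiset \<Rightarrow> real list \<Rightarrow> bool" where
  "is_arrangement g xs \<longleftrightarrow> mset xs = g"

definition cyc_desc :: "real list \<Rightarrow> nat" where
  "cyc_desc xs = card {t. t < length xs \<and> xs ! t \<ge> xs ! ((t + 1) mod length xs)}"

definition T_min :: "real multiset \<Rightarrow> nat" where
  "T_min g = (LEAST c. \<exists>xs. is_arrangement g xs \<and> cyc_desc xs = c)"

definition good_arrangement :: "real multiset \<Rightarrow> real list \<Rightarrow> bool" where
  "good_arrangement g xs \<longleftrightarrow> is_arrangement g xs \<and> cyc_desc xs = T_min g"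

definition defect :: "nat \<Rightarrow> nat \<Rightarrow> (nat \<Rightarrow> real multiset) \<Rightarrow> int" where
  "defect n r g = int r * (int n - 2) - (\<Sum>i<n. int (T_min (g i)))"

definition tau :: "nat \<Rightarrow> nat \<Rightarrow> (nat \<Rightarrow> real list) \<Rightarrow> nat \<Rightarrow> nat" where
  "tau n r a j = card {i. i < n \<and> a i ! j \<ge> a i ! ((j + 1) mod r)}"

text \<open>Parabolic degree of the line bundle [k; w_1,...,w_n].\<close>
definition par_deg_lb :: "int \<Rightarrow> real list \<Rightarrow> real" where
  "par_deg_lb k ws = of_int k + sum_list ws"

definition par_deg_sum :: "(int \<times> real list) list \<Rightarrow> real" where
  "par_deg_sum Es = (\<Sum>E\<leftarrow>Es. par_deg_lb (fst E) (snd E))"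

end

theory Submission
  imports Defs
begin

text \<open>Put \<open>c\<^sub>j = \<tau>\<^sub>j + 2 - n\<close>. Counting descents column by column gives
  \<open>\<Sum>\<^sub>j \<tau>\<^sub>j = \<Sum>\<^sub>i T(g\<^sub>i)\<close> for good arrangements, so \<open>\<Sum>\<^sub>j c\<^sub>j = -\<delta>(g) < 0\<close>. The
  constraints ask \<open>k\<close> to increase by at least \<open>c\<^sub>j\<close> from \<open>j\<close> to \<open>j + 1\<close>; the partial sums
  of \<open>c\<close>, shifted by a constant, satisfy them with slack at least 1 when wrapping around from
  \<open>r\<close> to \<open>1\<close>. Adding 1 on a final segment of the indices uses up this slack and adjusts
  \<open>\<Sum>\<^sub>j k\<^sub>j\<close> modulo \<open>r\<close>, so \<open>\<Sum>\<^sub>j k\<^sub>j\<close> can be made equal to any integer, in particular to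
  minus the (integral) total weight, which makes the parabolic degree vanish.\<close>

lemma of_nat_card_less_eq_sum_indicator:
  fixes n :: nat
  shows "of_nat (card {i. i < n \<and> P i}) = (\<Sum>i<n. if P i then 1 else 0)"
proof -
  have "{i. i < n \<and> P i} = {..<n} \<inter> {i. P i}" by auto
  then show ?thesis by (simp add: sum.If_cases)
qed

lemma cyclic_increments_with_prescribed_sum:
  fixes c :: "nat \<Rightarrow> int" and N :: int
  assumes "0 < r" and "(\<Sum>j<r. c j) < 0"
  shows "\<exists>k. (\<forall>j<r. k j + c j \<le> k ((j + 1) mod r)) \<and> (\<Sum>j<r. k j) = N"
proof -
  define P where "P j = (\<Sum>l<j. c l)" for j
  define d where "d = N - (\<Sum>j<r. P j)"
  define t where "t = nat (d mod int r)"
  define K where "K = d div int r"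
  have t: "t < r" "d = int r * K + int t"
    using \<open>0 < r\<close> by (simp_all add: t_def K_def nat_less_iff)
  define k where "k j = K + P j + (if r \<le> j + t then 1 else 0)" for j
  have "k j + c j \<le> k ((j + 1) mod r)" if "j < r" for j
  proof (cases "j + 1 < r")
    case True
    then show ?thesis by (simp add: k_def P_def)
  next
    case False
    then have "j = r - 1" using that by simp
    moreover have "(\<Sum>l<r. c l) = P (r - 1) + c (r - 1)"
      using \<open>0 < r\<close> unfolding P_def by (metis Suc_pred' sum.lessThan_Suc)
    ultimately show ?thesis using assms(2) t(1) by (simp add: k_def P_def)
  qed
  moreover have "(\<Sum>j<r. k j) = N"
  proof -
    have "{j. j < r \<and> r \<le> j + t} = {r - t..<r}" by auto
    then have "(\<Sum>j<r. if r \<le> j + t then 1 else 0) = int t"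
      using of_nat_card_less_eq_sum_indicator[of r "\<lambda>j. r \<le> j + t", where 'a=int] t(1)
      by simp
    then show ?thesis using t(2) by (simp add: k_def sum.distrib d_def)
  qed
  ultimately show ?thesis by blast
qed

lemma sum_tau_eq_sum_cyc_desc:
  assumes "\<forall>i<n. length (a i) = r"
  shows "(\<Sum>j<r. tau n r a j) = (\<Sum>i<n. cyc_desc (a i))"
proof -
  have "(\<Sum>j<r. tau n r a j)
      = (\<Sum>j<r. \<Sum>i<n. if a i ! j \<ge> a i ! ((j + 1) mod r) then 1 else 0)"
    using of_nat_card_less_eq_sum_indicator[where 'a=nat] by (simp add: tau_def)
  also have "\<dots> = (\<Sum>i<n. \<Sum>j<r. if a i ! j \<ge> a i ! ((j + 1) mod r) then 1 else 0)"
    by (rule sum.swap)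
  also have "\<dots> = (\<Sum>i<n. cyc_desc (a i))"
    using assms of_nat_card_less_eq_sum_indicator[where 'a=nat] by (simp add: cyc_desc_def)
  finally show ?thesis .
qed

lemma par_deg_sum_columns:
  assumes "\<forall>i<n. length (a i) = r"
  shows "par_deg_sum (map (\<lambda>j. (k j, map (\<lambda>i. a i ! j) [0..<n])) [0..<r])
    = of_int (\<Sum>j<r. k j) + (\<Sum>i<n. sum_list (a i))"
proof -
  have "par_deg_sum (map (\<lambda>j. (k j, map (\<lambda>i. a i ! j) [0..<n])) [0..<r])
      = (\<Sum>j<r. of_int (k j) + (\<Sum>i<n. a i ! j))"
    by (simp add: par_deg_sum_def par_deg_lb_def sum_list_sum_nth atLeast0LessThan o_def)
  also have "\<dots> = of_int (\<Sum>j<r. k j) + (\<Sum>i<n. \<Sum>j<r. a i ! j)"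
    by (simp add: sum.distrib sum.swap[of _ "{..<r}"])
  also have "\<dots> = of_int (\<Sum>j<r. k j) + (\<Sum>i<n. sum_list (a i))"
    using assms by (simp add: sum_list_sum_nth atLeast0LessThan)
  finally show ?thesis .
qed

theorem theorem6p8:
  fixes n r :: nat and g :: "nat \<Rightarrow> real multiset" and a :: "nat \<Rightarrow> real list"
  assumes deg: "\<forall>i<n. size (g i) = r"
    and range: "\<forall>i<n. \<forall>x\<in>#g i. 0 \<le> x \<and> x < 1"
    and integral: "(\<Sum>i<n. \<Sum>\<^sub># (g i)) \<in> \<int>"
    and pos: "defect n r g > 0"
    and good: "\<forall>i<n. good_arrangement (g i) (a i)"
  shows "\<exists>k :: nat \<Rightarrow> int.
     (\<forall>j<r. k ((j + 1) mod r) \<ge> int (tau n r a j) + k j + 2 - int n) \<and>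
     par_deg_sum (map (\<lambda>j. (k j, map (\<lambda>i. a i ! j) [0..<n])) [0..<r]) = 0"
proof (cases "r = 0")
  case True
  then show ?thesis by (simp add: par_deg_sum_def)
next
  case False
  have mset: "\<forall>i<n. mset (a i) = g i" and T: "\<forall>i<n. cyc_desc (a i) = T_min (g i)"
    using good by (simp_all add: good_arrangement_def is_arrangement_def)
  with deg have len: "\<forall>i<n. length (a i) = r" by (metis size_mset)
  have "(\<Sum>j<r. int (tau n r a j) + (2 - int n)) = int (\<Sum>j<r. tau n r a j) + int r * (2 - int n)"
    by (simp add: sum.distrib)
  also have "\<dots> = - defect n r g"
    using sum_tau_eq_sum_cyc_desc[OF len] T by (simp add: defect_def algebra_simps)
  finally have "(\<Sum>j<r. int (tau n r a j) + (2 - int n)) < 0" using pos by simp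
  moreover obtain S where S: "(\<Sum>i<n. \<Sum>\<^sub># (g i)) = of_int S"
    using integral by (auto elim: Ints_cases)
  ultimately obtain k where k: "\<forall>j<r. k j + (int (tau n r a j) + (2 - int n)) \<le> k ((j + 1) mod r)"
    and sum_k: "(\<Sum>j<r. k j) = - S"
    using cyclic_increments_with_prescribed_sum[of r _ "- S"] False by blast
  have "(\<Sum>i<n. sum_list (a i)) = (\<Sum>i<n. \<Sum>\<^sub># (g i))"
    using mset by (auto intro!: sum.cong simp flip: sum_mset_sum_list)
  then show ?thesis
    using k sum_k S par_deg_sum_columns[OF len, of k] by (auto simp: algebra_simps)
qed

end
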